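(* For $\mu\in\mathbb{R}$, $\sigma>0$, $\alpha\in\mathbb{R}$, let $X\sim\mathcal{N}(\mu,\sigma)$ and define $I(\mu,\sigma,\alpha)=(\mu-\alpha)\left(1-F_X(\alpha)\right)+\sigma^2 f_X(\alpha)$. Then $I$ is always convex in $\mu$, i.e. $\frac{\partial^2}{\partial\mu^2}I(\mu,\sigma,\alpha)\ge0$, and $I$ is convex in $\sigma$, i.e. $\frac{\partial^2}{\partial\sigma^2}I(\mu,\sigma,\alpha)\ge0$, whenever $\alpha\le\mu-\sqrt{\tfrac32}\,\sigma$ or $\alpha\ge\mu+\sqrt{\tfrac32}\,\sigma$.
   Context: $\mathcal{N}(\mu,\sigma)$ denotes the normal distribution with mean $\mu$ and standard deviation $\sigma$; $f_X$ and $F_X$ are the density and cumulative distribution function of $X$ (which depend on $\mu,\sigma$). *)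

theory Defs
  imports "HOL-Probability.Probability"
begin

definition normal_pdf :: "real \<Rightarrow> real \<Rightarrow> real \<Rightarrow> real" where
  "normal_pdf \<mu> \<sigma> x = normal_density \<mu> \<sigma> x"

definition normal_cdf :: "real \<Rightarrow> real \<Rightarrow> real \<Rightarrow> real" where
  "normal_cdf \<mu> \<sigma> x = cdf (density lborel (normal_density \<mu> \<sigma>)) x"

definition I_fun :: "real \<Rightarrow> real \<Rightarrow> real \<Rightarrow> real" where
  "I_fun \<mu> \<sigma> \<alpha> = (\<mu> - \<alpha>) * (1 - normal_cdf \<mu> \<sigma> \<alpha>) + \<sigma>\<^sup>2 * normal_pdf \<mu> \<sigma> \<alpha>"

end

theory Submission
  imports Defs
begin

text \<open>
  With \<open>\<Phi>\<close>, \<open>\<phi>\<close> the standard normal cdf and density and \<open>c = \<alpha> - \<mu>\<close>, standardizing gives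
  \<open>I = (\<mu> - \<alpha>) (1 - \<Phi> (c/\<sigma>)) + \<sigma> \<phi> (c/\<sigma>)\<close>. Differentiating in \<open>\<mu>\<close> gives
  \<open>1 - \<Phi> (c/\<sigma>)\<close> and then \<open>\<phi> (c/\<sigma>) / \<sigma>\<close>. Differentiating in \<open>\<sigma>\<close>, the identity
  \<open>\<phi>' x = - x \<phi> x\<close> makes all terms but one cancel, leaving \<open>\<phi> (c/\<sigma>)\<close>, whose derivative is
  \<open>c\<^sup>2 \<phi> (c/\<sigma>) / \<sigma>\<^sup>3\<close>. Both second derivatives are nonnegative, so \<open>I\<close> is in fact convex in
  \<open>\<sigma>\<close> for every \<open>\<alpha>\<close>.
\<close>

lemma cdf_density_diff:
  fixes f :: "real \<Rightarrow> real"
  assumes "prob_space (density lborel f)" and "continuous_on UNIV f" and "\<And>x. 0 \<le> f x"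
    and "a \<le> u"
  shows "cdf (density lborel f) u - cdf (density lborel f) a = integral {a..u} f"
proof -
  let ?M = "density lborel f"
  interpret prob_space ?M by fact
  have f_integrable: "f integrable_on {a..u}"
    using assms(2) continuous_on_subset integrable_continuous_interval by blast
  have "cdf ?M u - cdf ?M a = measure ?M ({..u} - {..a})"
    unfolding cdf_def using \<open>a \<le> u\<close> by (subst finite_measure_Diff) auto
  also have "{..u} - {..a} = {a<..u}" by auto
  also have "(f has_integral integral {a..u} f) {a<..u}"
    using integrable_integral[OF f_integrable]
    by (subst has_integral_spike_set_eq[where T="{a..u}"])
      (auto intro: negligible_subset[OF negligible_sing[of a]])
  then have "emeasure ?M {a<..u} = ennreal (integral {a..u} f)"
    using assms(2,3)
    by (subst emeasure_density)
      (auto intro!: nn_integral_has_integral_lebesgue' borel_measurable_continuous_onI)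
  then have "measure ?M {a<..u} = integral {a..u} f"
    unfolding measure_def using integral_nonneg[OF f_integrable] assms(3) by simp
  finally show ?thesis .
qed

lemma cdf_density_has_real_derivative:
  fixes f :: "real \<Rightarrow> real"
  assumes "prob_space (density lborel f)" and "continuous_on UNIV f" and "\<And>x. 0 \<le> f x"
  shows "(cdf (density lborel f) has_real_derivative f x) (at x)"
proof -
  let ?F = "cdf (density lborel f)" and ?a = "x - 1" and ?b = "x + 1"
  have "((\<lambda>u. integral {?a..u} f) has_vector_derivative f x) (at x within {?a..?b})"
    using assms(2) continuous_on_subset by (intro integral_has_vector_derivative) auto
  also have "at x within {?a..?b} = at x" by (rule at_within_Icc_at) auto
  finally have "((\<lambda>u. ?F ?a + integral {?a..u} f) has_real_derivative f x) (at x)"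
    by (auto intro!: derivative_eq_intros
        simp: has_real_derivative_iff_has_vector_derivative[symmetric])
  then show ?thesis
  proof (rule has_field_derivative_transform_within_open[where S="{?a<..<?b}"])
    fix y assume "y \<in> {?a<..<?b}"
    then show "?F ?a + integral {?a..y} f = ?F y"
      using cdf_density_diff[OF assms, of ?a y] by simp
  qed auto
qed

lemma continuous_on_std_normal_density: "continuous_on A std_normal_density"
  unfolding std_normal_density_def by (auto intro!: continuous_intros)

lemma std_normal_cdf_has_real_derivative [derivative_intros]:
  assumes "(f has_real_derivative f') (at x within s)"
  shows "((\<lambda>x. normal_cdf 0 1 (f x)) has_real_derivative std_normal_density (f x) * f')
    (at x within s)"
proof -
  have "(normal_cdf 0 1 has_real_derivative std_normal_density y) (at y)" for y
    unfolding normal_cdf_def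
    by (rule cdf_density_has_real_derivative)
      (simp_all add: prob_space_normal_density continuous_on_std_normal_density)
  then show ?thesis using DERIV_chain2 assms by blast
qed

lemma std_normal_density_has_real_derivative [derivative_intros]:
  assumes "(f has_real_derivative f') (at x within s)"
  shows "((\<lambda>x. std_normal_density (f x)) has_real_derivative
    - f x * std_normal_density (f x) * f') (at x within s)"
proof -
  have "(std_normal_density has_real_derivative - y * std_normal_density y) (at y)" for y
    unfolding std_normal_density_def by (auto intro!: derivative_eq_intros simp: field_simps)
  then show ?thesis using DERIV_chain2 assms by blast
qed

lemma normal_density_standardize:
  "\<sigma> > 0 \<Longrightarrow> normal_density \<mu> \<sigma> x = std_normal_density ((x - \<mu>) / \<sigma>) / \<sigma>"
  unfolding normal_density_def by (simp add: real_sqrt_mult power_divide)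

lemma normal_cdf_standardize:
  assumes "\<sigma> > 0"
  shows "normal_cdf \<mu> \<sigma> \<alpha> = normal_cdf 0 1 ((\<alpha> - \<mu>) / \<sigma>)"
proof -
  let ?g = "\<lambda>x. ennreal (normal_density \<mu> \<sigma> x) * indicator {..\<alpha>} x"
  have "emeasure (density lborel (normal_density \<mu> \<sigma>)) {..\<alpha>} = (\<integral>\<^sup>+x. ?g x \<partial>lborel)"
    by (simp add: emeasure_density)
  also have "\<dots> = (\<integral>\<^sup>+x. ennreal \<sigma> * ?g (\<mu> + \<sigma> * x) \<partial>lborel)"
    using nn_integral_real_affine[where c=\<sigma> and t=\<mu> and f="?g"] assms
    by (simp add: nn_integral_cmult)
  also have "\<dots> = (\<integral>\<^sup>+x. ennreal (std_normal_density x) * indicator {..(\<alpha> - \<mu>) / \<sigma>} x \<partial>lborel)"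
  proof (rule nn_integral_cong)
    fix x
    have "\<sigma> * normal_density \<mu> \<sigma> (\<mu> + \<sigma> * x) = std_normal_density x"
      using assms normal_density_standardize[OF assms, of \<mu> "\<mu> + \<sigma> * x"] by simp
    moreover have "\<mu> + \<sigma> * x \<le> \<alpha> \<longleftrightarrow> x \<le> (\<alpha> - \<mu>) / \<sigma>"
      using assms by (simp add: field_simps)
    ultimately show "ennreal \<sigma> * ?g (\<mu> + \<sigma> * x)
        = ennreal (std_normal_density x) * indicator {..(\<alpha> - \<mu>) / \<sigma>} x"
      using assms by (simp add: indicator_def mult.assoc[symmetric] ennreal_mult[symmetric])
  qed
  also have "\<dots> = emeasure (density lborel std_normal_density) {..(\<alpha> - \<mu>) / \<sigma>}"
    by (subst emeasure_density) auto
  finally show ?thesis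
    unfolding normal_cdf_def cdf_def measure_def by simp
qed

lemma I_fun_standardize:
  assumes "\<sigma> > 0"
  shows "I_fun \<mu> \<sigma> \<alpha> = (\<mu> - \<alpha>) * (1 - normal_cdf 0 1 ((\<alpha> - \<mu>) / \<sigma>))
    + \<sigma> * std_normal_density ((\<alpha> - \<mu>) / \<sigma>)"
  unfolding I_fun_def normal_pdf_def normal_cdf_standardize[OF assms]
    normal_density_standardize[OF assms]
  using assms by (simp add: power2_eq_square)

lemma deriv2_I_fun_mean:
  assumes "\<sigma> > 0"
  shows "deriv (deriv (\<lambda>m. I_fun m \<sigma> \<alpha>)) \<mu> = std_normal_density ((\<alpha> - \<mu>) / \<sigma>) / \<sigma>"
proof -
  have "((\<lambda>m. I_fun m \<sigma> \<alpha>) has_real_derivative 1 - normal_cdf 0 1 ((\<alpha> - m) / \<sigma>)) (at m)"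
    for m
    unfolding I_fun_standardize[OF assms]
    using assms by (auto intro!: derivative_eq_intros simp: field_simps)
  then have "deriv (\<lambda>m. I_fun m \<sigma> \<alpha>) = (\<lambda>m. 1 - normal_cdf 0 1 ((\<alpha> - m) / \<sigma>))"
    using DERIV_imp_deriv by blast
  moreover have "((\<lambda>m. 1 - normal_cdf 0 1 ((\<alpha> - m) / \<sigma>)) has_real_derivative
      std_normal_density ((\<alpha> - \<mu>) / \<sigma>) / \<sigma>) (at \<mu>)"
    using assms by (auto intro!: derivative_eq_intros simp: field_simps)
  ultimately show ?thesis by (simp add: DERIV_imp_deriv)
qed

lemma I_fun_has_real_derivative_sd:
  assumes "s > 0"
  shows "((\<lambda>s. I_fun \<mu> s \<alpha>) has_real_derivative std_normal_density ((\<alpha> - \<mu>) / s)) (at s)"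
proof -
  let ?g = "\<lambda>s. (\<mu> - \<alpha>) * (1 - normal_cdf 0 1 ((\<alpha> - \<mu>) / s))
    + s * std_normal_density ((\<alpha> - \<mu>) / s)"
  have "(?g has_real_derivative std_normal_density ((\<alpha> - \<mu>) / s)) (at s)"
    using assms by (auto intro!: derivative_eq_intros simp: field_simps power2_eq_square)
  then show ?thesis
    by (rule has_field_derivative_transform_within_open[where S="{0<..}"])
      (use assms I_fun_standardize in auto)
qed

lemma deriv2_I_fun_sd:
  assumes "\<sigma> > 0"
  shows "deriv (deriv (\<lambda>s. I_fun \<mu> s \<alpha>)) \<sigma>
    = (\<alpha> - \<mu>)\<^sup>2 * std_normal_density ((\<alpha> - \<mu>) / \<sigma>) / \<sigma> ^ 3"
proof -
  have "((\<lambda>s. std_normal_density ((\<alpha> - \<mu>) / s)) has_real_derivative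
      (\<alpha> - \<mu>)\<^sup>2 * std_normal_density ((\<alpha> - \<mu>) / \<sigma>) / \<sigma> ^ 3) (at \<sigma>)"
    using assms
    by (auto intro!: derivative_eq_intros simp: field_simps power2_eq_square power3_eq_cube)
  then have "(deriv (\<lambda>s. I_fun \<mu> s \<alpha>) has_real_derivative
      (\<alpha> - \<mu>)\<^sup>2 * std_normal_density ((\<alpha> - \<mu>) / \<sigma>) / \<sigma> ^ 3) (at \<sigma>)"
    by (rule has_field_derivative_transform_within_open[where S="{0<..}"])
      (use assms in \<open>auto intro!: DERIV_imp_deriv[symmetric] I_fun_has_real_derivative_sd\<close>)
  then show ?thesis by (rule DERIV_imp_deriv)
qed

theorem lemma5:
  fixes \<mu> \<sigma> \<alpha> :: real
  assumes "\<sigma> > 0"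
  shows "deriv (deriv (\<lambda>m. I_fun m \<sigma> \<alpha>)) \<mu> \<ge> 0 \<and>
         ((\<alpha> \<le> \<mu> - sqrt (3/2) * \<sigma> \<or> \<alpha> \<ge> \<mu> + sqrt (3/2) * \<sigma>) \<longrightarrow>
           deriv (deriv (\<lambda>s. I_fun \<mu> s \<alpha>)) \<sigma> \<ge> 0)"
  using assms by (simp add: deriv2_I_fun_mean deriv2_I_fun_sd)

end
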